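(* Let $G$ be a hued patch and let $\varphi:V(C)\to\mathbb{Z}_2^2$ be a single-hexagon 4-coloring of the boundary $C$ of the outer face of $G$, with central hue $c$ and central color $k$. Let $K=\mathbb{Z}_2^2\setminus\{k\}$, let $H$ be the (bipartite) subgraph of $G$ induced by the vertices of hue different from $c$, and let $\varphi'$ be the restriction of $\varphi$ to $V(H)\cap V(C)$. Then $\varphi$ extends to a proper 4-coloring of $G$ if and only if $\varphi'$ extends to a proper 3-coloring of $H$ using the colors in $K$.
   Context: A patch is a connected plane graph all of whose faces, except possibly the outer face, have length three. A hued graph is a graph with a proper coloring $\psi:V\to\mathbb{Z}_3$ (hue); a dappled graph is a hued graph with additionally a proper coloring $\varphi:V\to\mathbb{Z}_2^2$ (color); for a hued graph $C$ and proper $\varphi:V(C)\to\mathbb{Z}_2^2$, $C^\varphi$ is the corresponding dappled graph. Homomorphisms of dappled graphs map adjacent vertices to adjacent vertices and preserve hue and color. The dappled triangular grid $\mathbf{T}$ has vertex set $\mathbb{Z}^2$, with $(i_1,j_1)$ and $(i_2,j_2)$ adjacent iff $(i_2-i_1,j_2-j_1)\in\{\pm(1,0),\pm(0,1),\pm(1,1)\}$, hue $(i+j)\bmod 3$ and color $(i\bmod 2,j\bmod 2)$ at $(i,j)$. A hexagon is the dappled subgraph of $\mathbf{T}$ induced by a vertex (its center) and its neighbors. A 4-coloring $\varphi$ of a connected hued graph $C$ is a single-hexagon coloring if there is a homomorphism $f$ from $C^\varphi$ to $\mathbf{T}$ whose image lies in a hexagon $X$; the central hue and central color are the hue and color of the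 center of $X$. (In that case a vertex of $C$ has color $k$ iff it has hue $c$.) The boundary $C$ carries the hues inherited from $G$. *)

theory Defs
  imports Main "HOL-Library.Numeral_Type"
begin

text \<open>A finite simple graph: vertex set V and a symmetric irreflexive set E of
  ordered pairs (darts); each undirected edge appears as both (u,w) and (w,u).\<close>

definition simple_graph :: "'v set \<Rightarrow> ('v \<times> 'v) set \<Rightarrow> bool" where
  "simple_graph V E \<longleftrightarrow> finite V \<and> E \<subseteq> V \<times> V \<and>
     (\<forall>u w. (u, w) \<in> E \<longrightarrow> (w, u) \<in> E) \<and> (\<forall>u. (u, u) \<notin> E)"

definition nbrs :: "('v \<times> 'v) set \<Rightarrow> 'v \<Rightarrow> 'v set" where
  "nbrs E u = {w. (u, w) \<in> E}"

definition connected_graph :: "'v set \<Rightarrow> ('v \<times> 'v) set \<Rightarrow> bool" where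
  "connected_graph V E \<longleftrightarrow> V \<noteq> {} \<and> (\<forall>u\<in>V. \<forall>w\<in>V. (u, w) \<in> E\<^sup>*)"

definition proper_col :: "'v set \<Rightarrow> ('v \<times> 'v) set \<Rightarrow> ('v \<Rightarrow> 'c) \<Rightarrow> bool" where
  "proper_col V E f \<longleftrightarrow> (\<forall>(u, w)\<in>E. f u \<noteq> f w)"

text \<open>A rotation system assigns to every vertex u a cyclic permutation rot u of its
  neighbourhood (the clockwise order of the edges around u in the embedding).\<close>

definition rotation_system :: "'v set \<Rightarrow> ('v \<times> 'v) set \<Rightarrow> ('v \<Rightarrow> 'v \<Rightarrow> 'v) \<Rightarrow> bool" where
  "rotation_system V E rot \<longleftrightarrow>
     (\<forall>u\<in>V. bij_betw (rot u) (nbrs E u) (nbrs E u) \<and>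
        (\<forall>w\<in>nbrs E u. \<forall>w'\<in>nbrs E u. \<exists>n. (rot u ^^ n) w = w'))"

text \<open>Faces are the orbits of this permutation of the darts; the length of a
  face is the number of darts in its orbit (the length of its facial walk).\<close>

definition face_step :: "('v \<Rightarrow> 'v \<Rightarrow> 'v) \<Rightarrow> 'v \<times> 'v \<Rightarrow> 'v \<times> 'v" where
  "face_step rot = (\<lambda>(u, w). (w, rot w u))"

definition face_orbit :: "('v \<Rightarrow> 'v \<Rightarrow> 'v) \<Rightarrow> 'v \<times> 'v \<Rightarrow> ('v \<times> 'v) set" where
  "face_orbit rot d = {(face_step rot ^^ n) d | n. True}"

definition faces :: "('v \<times> 'v) set \<Rightarrow> ('v \<Rightarrow> 'v \<Rightarrow> 'v) \<Rightarrow> ('v \<times> 'v) set set" where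
  "faces E rot = face_orbit rot ` E"

text \<open>A connected plane graph: a connected simple graph with a rotation system of
  genus 0 (Euler's formula |V| - |E| + |F| = 2; |E| = number of darts / 2).
  The one-vertex graph (no edges) is a plane graph with a single (outer) face.\<close>

definition plane_graph :: "'v set \<Rightarrow> ('v \<times> 'v) set \<Rightarrow> ('v \<Rightarrow> 'v \<Rightarrow> 'v) \<Rightarrow> bool" where
  "plane_graph V E rot \<longleftrightarrow> simple_graph V E \<and> connected_graph V E \<and>
     rotation_system V E rot \<and>
     (E = {} \<or> card V + card (faces E rot) = card E div 2 + 2)"

text \<open>A patch with designated outer face Out (a face, i.e. a set of darts; Out = {} for the
  one-vertex graph): all faces other than Out have length three.\<close>

definition patch :: "'v set \<Rightarrow> ('v \<times> 'v) set \<Rightarrow> ('v \<Rightarrow> 'v \<Rightarrow> 'v) \<Rightarrow> ('v \<times> 'v) set \<Rightarrow> bool" where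
  "patch V E rot Out \<longleftrightarrow> plane_graph V E rot \<and>
     (if E = {} then Out = {}
      else Out \<in> faces E rot \<and> (\<forall>F\<in>faces E rot. F \<noteq> Out \<longrightarrow> card F = 3))"

definition bdry_V :: "'v set \<Rightarrow> ('v \<times> 'v) set \<Rightarrow> 'v set" where
  "bdry_V V Out = (if Out = {} then V else fst ` Out)"

definition bdry_E :: "('v \<times> 'v) set \<Rightarrow> ('v \<times> 'v) set" where
  "bdry_E Out = Out \<union> converse Out"

definition T_adj :: "int \<times> int \<Rightarrow> int \<times> int \<Rightarrow> bool" where
  "T_adj p q \<longleftrightarrow> (fst q - fst p, snd q - snd p) \<in>
     {(1, 0), (-1, 0), (0, 1), (0, -1), (1, 1), (-1, -1)}"

definition T_hue :: "int \<times> int \<Rightarrow> 3" where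
  "T_hue p = of_int (fst p + snd p)"

definition T_color :: "int \<times> int \<Rightarrow> 2 \<times> 2" where
  "T_color p = (of_int (fst p), of_int (snd p))"

definition hexagon :: "int \<times> int \<Rightarrow> (int \<times> int) set" where
  "hexagon z = insert z {q. T_adj z q}"

definition dappled_hom_T :: "'v set \<Rightarrow> ('v \<times> 'v) set \<Rightarrow> ('v \<Rightarrow> 3) \<Rightarrow> ('v \<Rightarrow> 2 \<times> 2)
    \<Rightarrow> ('v \<Rightarrow> int \<times> int) \<Rightarrow> bool" where
  "dappled_hom_T V E hue col f \<longleftrightarrow>
     (\<forall>(u, w)\<in>E. T_adj (f u) (f w)) \<and>
     (\<forall>v\<in>V. T_hue (f v) = hue v \<and> T_color (f v) = col v)"

definition single_hexagon_coloring :: "'v set \<Rightarrow> ('v \<times> 'v) set \<Rightarrow> ('v \<Rightarrow> 3) \<Rightarrow> ('v \<Rightarrow> 2 \<times> 2)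
    \<Rightarrow> 3 \<Rightarrow> 2 \<times> 2 \<Rightarrow> bool" where
  "single_hexagon_coloring V E hue col c k \<longleftrightarrow> proper_col V E col \<and>
     (\<exists>f z. dappled_hom_T V E hue col f \<and> f ` V \<subseteq> hexagon z \<and>
            T_hue z = c \<and> T_color z = k)"

end

theory Submission
  imports Defs "HOL-Combinatorics.Orbits" "HOL-Library.Product_Plus"
begin

text \<open>
  A proper 4-colouring g of the hued patch G determines on every edge a step of the grid T,
  namely the unique one realising the change of hue and colour along the edge.  Around each
  inner face, a triangle with three distinct hues and colours, these steps sum to zero, so by a
  discrete Poincare lemma for plane graphs (proved from Euler's formula with a spanning tree
  and a dual spanning tree) they integrate to a homomorphism from G to T, which agrees with the
  given single-hexagon map of the boundary.  The points of T whose hue differs from that of the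
  centre z of the hexagon can be properly coloured, by sectors around z, with the three colours
  other than that of z, agreeing with the colouring of T on the hexagon; composing gives the
  3-colouring of H.  Conversely, a 3-colouring of H avoiding k extends by giving colour k to all
  vertices of hue c, which matches the boundary because there hue c and colour k coincide.
\<close>

lemma rtrancl_exit_edge:
  assumes "(a, b) \<in> R\<^sup>*" "a \<in> W" "b \<notin> W"
  obtains p q where "(p, q) \<in> R" "p \<in> W" "q \<notin> W"
  using assms by (induction rule: rtrancl_induct) blast+

lemma rtrancl_closer_predecessor:
  assumes "(a, v) \<in> R\<^sup>*" "v \<noteq> a"
  obtains u where "(u, v) \<in> R" "(LEAST n. (a, u) \<in> R ^^ n) < (LEAST n. (a, v) \<in> R ^^ n)"
proof -
  let ?dist = "\<lambda>v. LEAST n. (a, v) \<in> R ^^ n"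
  obtain n where "(a, v) \<in> R ^^ n" using assms(1) rtrancl_power by blast
  then have av: "(a, v) \<in> R ^^ ?dist v" by (rule LeastI)
  then obtain m where m: "?dist v = Suc m" using assms(2) by (cases "?dist v") auto
  then obtain u where "(a, u) \<in> R ^^ m" "(u, v) \<in> R" using av by (metis relpow_Suc_E)
  moreover from this(1) have "?dist u \<le> m" by (rule Least_le)
  ultimately show thesis using m that by simp
qed

text \<open>The darts from the parents in a breadth-first tree and their reverses are all distinct.\<close>

lemma card_darts_connected:
  fixes s t :: "'d \<Rightarrow> 'n" and r :: "'d \<Rightarrow> 'd"
  assumes "finite X" "finite D"
    and rev: "\<And>x. x \<in> D \<Longrightarrow> r x \<in> D \<and> s (r x) = t x \<and> t (r x) = s x"
    and "root \<in> X"
    and conn: "\<And>v. v \<in> X \<Longrightarrow> (root, v) \<in> {(s x, t x) | x. x \<in> D}\<^sup>*"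
  shows "2 * (card X - 1) \<le> card D"
proof -
  define R where "R = {(s x, t x) | x. x \<in> D}"
  define dist where "dist v = (LEAST n. (root, v) \<in> R ^^ n)" for v
  have "\<exists>x. x \<in> D \<and> t x = v \<and> dist (s x) < dist v" if "v \<in> X - {root}" for v
  proof -
    have "(root, v) \<in> R\<^sup>*" "v \<noteq> root" using conn that by (auto simp: R_def)
    then show ?thesis by (rule rtrancl_closer_predecessor) (auto simp: R_def dist_def)
  qed
  then obtain par where par: "\<And>v. v \<in> X - {root} \<Longrightarrow> par v \<in> D \<and> t (par v) = v \<and> dist (s (par v)) < dist v"
    by metis
  let ?Y = "X - {root}"
  have "inj_on par ?Y"
    by (rule inj_on_inverseI[where g = t]) (use par in blast)
  moreover have "inj_on (\<lambda>v. r (par v)) ?Y"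
    by (rule inj_on_inverseI[where g = s]) (use par rev in auto)
  moreover have "par a \<noteq> r (par b)" if "a \<in> ?Y" "b \<in> ?Y" for a b
    using par[OF that(1)] par[OF that(2)] rev[of "par b"] by auto
  then have "par ` ?Y \<inter> (\<lambda>v. r (par v)) ` ?Y = {}" by auto
  ultimately have "2 * card ?Y = card (par ` ?Y \<union> (\<lambda>v. r (par v)) ` ?Y)"
    using \<open>finite X\<close> by (simp add: card_Un_disjoint card_image)
  also have "\<dots> \<le> card D"
    using par rev by (intro card_mono[OF \<open>finite D\<close>]) auto
  finally have "2 * card ?Y \<le> card D" .
  then show ?thesis using \<open>root \<in> X\<close> \<open>finite X\<close> by simp
qed

lemma exists_minimal_spanning_subset:
  assumes "finite S" "sym S" "\<And>u w. u \<in> V \<Longrightarrow> w \<in> V \<Longrightarrow> (u, w) \<in> S\<^sup>*"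
  obtains T where "T \<subseteq> S" "sym T" "\<And>u w. u \<in> V \<Longrightarrow> w \<in> V \<Longrightarrow> (u, w) \<in> T\<^sup>*"
    and "\<And>e. e \<in> T \<Longrightarrow> (fst e, snd e) \<notin> (T - {e, prod.swap e})\<^sup>*"
proof -
  define spanning where
    "spanning T \<longleftrightarrow> T \<subseteq> S \<and> sym T \<and> (\<forall>u\<in>V. \<forall>w\<in>V. (u, w) \<in> T\<^sup>*)" for T
  obtain T where T: "spanning T" and min: "\<And>T'. spanning T' \<Longrightarrow> card T \<le> card T'"
    using ex_has_least_nat[of spanning S card] assms by (auto simp: spanning_def)
  have "(fst e, snd e) \<notin> (T - {e, prod.swap e})\<^sup>*" if "e \<in> T" for e
  proof
    let ?T' = "T - {e, prod.swap e}"
    assume path: "(fst e, snd e) \<in> ?T'\<^sup>*"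
    have "sym ?T'" using T by (cases e) (auto simp: spanning_def sym_def)
    then have "(snd e, fst e) \<in> ?T'\<^sup>*" using path by (rule symD[OF sym_rtrancl])
    with path have "T \<subseteq> ?T'\<^sup>*" by (cases e) auto
    then have "T\<^sup>* \<subseteq> ?T'\<^sup>*" using rtrancl_subset_rtrancl by blast
    with T \<open>sym ?T'\<close> have "spanning ?T'" by (auto simp: spanning_def)
    moreover have "card ?T' < card T"
      using that T finite_subset[OF _ \<open>finite S\<close>] by (intro psubset_card_mono) (auto simp: spanning_def)
    ultimately show False using min by fastforce
  qed
  with T that show thesis by (auto simp: spanning_def)
qed

lemma swap_closed_induct:
  assumes "finite I" "\<And>x. x \<in> I \<Longrightarrow> prod.swap x \<in> I \<and> prod.swap x \<noteq> x"
    and "P {}"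
    and pair: "\<And>x J. finite J \<Longrightarrow> x \<notin> J \<Longrightarrow> prod.swap x \<notin> J \<Longrightarrow> prod.swap x \<noteq> x \<Longrightarrow> P J
      \<Longrightarrow> P (insert x (insert (prod.swap x) J))"
  shows "P I"
  using assms(1,2)
proof (induction I rule: finite_psubset_induct)
  case (psubset I)
  show ?case
  proof (cases "I = {}")
    case False
    then obtain u w where x: "(u, w) \<in> I" by auto
    define x where "x = (u, w)"
    define J where "J = I - {x, prod.swap x}"
    have "I = insert x (insert (prod.swap x) J)" using x psubset.prems by (auto simp: J_def x_def)
    moreover have "P J"
      using x psubset.prems by (intro psubset.IH) (auto simp: J_def x_def)
    moreover have "prod.swap x \<noteq> x" using x psubset.prems unfolding x_def by blast
    ultimately show ?thesis
      using pair[of J x] psubset.hyps by (simp add: J_def x_def)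
  qed (simp add: \<open>P {}\<close>)
qed

lemma sum_swap_antisymmetric:
  fixes d :: "'b \<times> 'b \<Rightarrow> 'a :: ab_group_add"
  assumes "finite I" "\<And>x. x \<in> I \<Longrightarrow> prod.swap x \<in> I \<and> prod.swap x \<noteq> x"
    and "\<And>x. x \<in> I \<Longrightarrow> d (prod.swap x) = - d x"
  shows "sum d I = 0"
proof -
  let ?P = "\<lambda>I. (\<forall>x\<in>I. d (prod.swap x) = - d x) \<longrightarrow> sum d I = 0"
  have "?P I"
  proof (rule swap_closed_induct[OF assms(1,2), where P = ?P])
    show "?P {}" by simp
  next
    fix x J
    assume J: "finite J" "x \<notin> J" "prod.swap x \<notin> J" "prod.swap x \<noteq> x" and IH: "?P J"
    show "?P (insert x (insert (prod.swap x) J))"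
    proof
      assume anti: "\<forall>y\<in>insert x (insert (prod.swap x) J). d (prod.swap y) = - d y"
      then have "sum d J = 0" using IH by blast
      moreover have "d (prod.swap x) = - d x" using anti by blast
      ultimately show "sum d (insert x (insert (prod.swap x) J)) = 0" using J by simp
    qed
  qed
  then show ?thesis using assms(3) by blast
qed

lemma even_card_swap_closed:
  assumes "finite I" "\<And>x. x \<in> I \<Longrightarrow> prod.swap x \<in> I \<and> prod.swap x \<noteq> x"
  shows "even (card I)"
  by (rule swap_closed_induct[OF assms, where P = "\<lambda>I. even (card I)"]) auto

section \<open>Faces of a rotation system\<close>

locale rotation_graph =
  fixes V :: "'v set" and E :: "('v \<times> 'v) set" and rot :: "'v \<Rightarrow> 'v \<Rightarrow> 'v"
  assumes simple: "simple_graph V E" and rotation: "rotation_system V E rot"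
begin

lemma finite_vertices: "finite V"
  using simple by (simp add: simple_graph_def)

lemma darts_subset: "E \<subseteq> V \<times> V"
  using simple by (simp add: simple_graph_def)

lemma finite_darts: "finite E"
  using finite_subset[OF darts_subset] finite_vertices by blast

lemma swap_dart: "x \<in> E \<Longrightarrow> prod.swap x \<in> E"
  using simple by (cases x) (simp add: simple_graph_def)

lemma swap_dart_neq: "x \<in> E \<Longrightarrow> prod.swap x \<noteq> x"
  using simple by (cases x) (auto simp: simple_graph_def)

lemma rot_nbrs:
  assumes "(u, w) \<in> E"
  shows "(u, rot u w) \<in> E"
proof -
  have "u \<in> V" using assms darts_subset by blast
  then have "rot u ` nbrs E u = nbrs E u"
    using rotation by (simp add: rotation_system_def bij_betw_def)
  then show ?thesis using assms by (auto simp: nbrs_def)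
qed

lemma face_step_dart:
  assumes "x \<in> E"
  shows "face_step rot x \<in> E"
proof (cases x)
  case (Pair u w)
  then show ?thesis using rot_nbrs[of w u] swap_dart[OF assms] by (simp add: face_step_def)
qed

lemma inj_on_face_step: "inj_on (face_step rot) E"
proof (rule inj_onI)
  fix x y assume "x \<in> E" "y \<in> E" and eq: "face_step rot x = face_step rot y"
  obtain u w u' w' where x: "x = (u, w)" and y: "y = (u', w')" by (cases x, cases y)
  have w: "w' = w" "rot w u = rot w u'" using eq by (auto simp: x y face_step_def)
  have "w \<in> V" "u \<in> nbrs E w" "u' \<in> nbrs E w"
    using \<open>x \<in> E\<close> \<open>y \<in> E\<close> swap_dart darts_subset by (auto simp: x y w nbrs_def)
  moreover have "inj_on (rot w) (nbrs E w)" if "w \<in> V"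
    using rotation that by (simp add: rotation_system_def bij_betw_def)
  ultimately have "u = u'" using w(2) by (auto dest: inj_onD)
  then show "x = y" by (simp add: x y w)
qed

text \<open>Face tracing, extended by the identity outside the darts so that it is a permutation
  and the orbit library applies.\<close>

definition face_perm :: "'v \<times> 'v \<Rightarrow> 'v \<times> 'v" where
  "face_perm x = (if x \<in> E then face_step rot x else x)"

abbreviation face :: "'v \<times> 'v \<Rightarrow> ('v \<times> 'v) set" where
  "face x \<equiv> orbit face_perm x"

lemma face_perm_permutes: "face_perm permutes E"
proof (rule bij_imp_permutes)
  have "face_step rot ` E = E"
    using endo_inj_surj[OF finite_darts] face_step_dart inj_on_face_step by blast
  then have "face_perm ` E = E"
    by (simp add: face_perm_def)
  moreover have "inj_on face_perm E"
    using inj_on_face_step by (simp add: inj_on_def face_perm_def)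
  ultimately show "bij_betw face_perm E E" by (simp add: bij_betw_def)
qed (simp add: face_perm_def)

lemma permutation_face_perm: "permutation face_perm"
  using face_perm_permutes finite_darts permutation_permutes by blast

lemma fst_face_perm: "x \<in> E \<Longrightarrow> fst (face_perm x) = snd x"
  by (cases x) (simp add: face_perm_def face_step_def)

lemma faces_eq: "faces E rot = face ` E"
proof -
  have "(face_perm ^^ n) x = (face_step rot ^^ n) x" if "x \<in> E" for x n
  proof (induction n)
    case (Suc n)
    moreover have "(face_step rot ^^ n) x \<in> E"
      using that by (induction n) (auto intro: face_step_dart)
    ultimately show ?case by (simp add: face_perm_def)
  qed simp
  then show ?thesis
    by (auto simp: faces_def face_orbit_def orbit_altdef_permutation[OF permutation_face_perm])
qed

lemma finite_faces: "finite (faces E rot)"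
  using finite_darts by (simp add: faces_eq)

lemma face_subset: "x \<in> E \<Longrightarrow> face x \<subseteq> E"
  by (rule permutes_orbit_subset[OF face_perm_permutes])

lemma in_face_self: "x \<in> face x"
  by (rule permutation_self_in_orbit[OF permutation_face_perm])

lemma face_eqI: "y \<in> face x \<Longrightarrow> face y = face x"
  by (rule orbit_cyclic_eq3[OF cyclic_on_orbit'[OF permutation_face_perm]])

lemma face_perm_image_face: "face_perm ` face x = face x"
proof (rule endo_inj_surj)
  show "finite (face x)" by (rule finite_orbit[OF in_face_self])
  show "face_perm ` face x \<subseteq> face x" by (rule image_subsetI) (rule orbit.step)
  show "inj_on face_perm (face x)" by (rule permutes_inj_on[OF face_perm_permutes])
qed

lemma sum_face_telescope:
  fixes Q :: "'v \<Rightarrow> 'a :: ab_group_add"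
  assumes "F \<in> faces E rot"
  shows "(\<Sum>y\<in>F. Q (snd y) - Q (fst y)) = 0"
proof -
  obtain x where x: "x \<in> E" "F = face x" using assms by (auto simp: faces_eq)
  have "(\<Sum>y\<in>F. Q (fst y)) = (\<Sum>y\<in>face_perm ` F. Q (fst y))"
    by (simp only: x(2) face_perm_image_face)
  also have "\<dots> = (\<Sum>y\<in>F. Q (fst (face_perm y)))"
    by (rule sum.reindex[OF permutes_inj_on[OF face_perm_permutes], unfolded comp_def])
  also have "\<dots> = (\<Sum>y\<in>F. Q (snd y))"
    using face_subset[OF x(1)] x(2) by (intro sum.cong) (auto simp: fst_face_perm)
  finally show ?thesis by (simp add: sum_subtractf)
qed

lemma mem_facesD:
  assumes "F \<in> faces E rot" "x \<in> F"
  shows "x \<in> E" "face x = F"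
proof -
  obtain y where "y \<in> E" "F = face y" using assms(1) by (auto simp: faces_eq)
  then show "x \<in> E" "face x = F" using assms(2) face_subset face_eqI by blast+
qed

lemma sum_darts_in_faces:
  assumes "\<Phi> \<subseteq> faces E rot"
  shows "(\<Sum>x | x \<in> E \<and> face x \<in> \<Phi>. g x) = (\<Sum>F\<in>\<Phi>. \<Sum>x\<in>F. g x)"
proof -
  have "{x. x \<in> E \<and> face x \<in> \<Phi>} = \<Union>\<Phi>"
    using assms mem_facesD in_face_self by blast
  moreover have "finite F" if "F \<in> \<Phi>" for F
    using that assms finite_subset[OF _ finite_darts] mem_facesD(1) by blast
  moreover have "F \<inter> G = {}" if "F \<in> \<Phi>" "G \<in> \<Phi>" "F \<noteq> G" for F G
    using that assms mem_facesD(2) by blast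
  ultimately show ?thesis by (simp add: sum.Union_disjoint)
qed

lemma triangular_face:
  assumes "F \<in> faces E rot" "card F = 3"
  obtains a b c where "F = {(a, b), (b, c), (c, a)}" "(a, b) \<in> E" "(b, c) \<in> E" "(c, a) \<in> E"
proof -
  obtain x where x: "x \<in> E" "F = face x" using assms(1) by (auto simp: faces_eq)
  let ?n = "funpow_dist1 face_perm x x"
  have "card F = ?n"
    using x(2) orbit_conv_funpow_dist1[OF in_face_self] inj_on_funpow_dist1[OF in_face_self]
    by (simp add: card_image)
  then have n: "?n = 3" using assms(2) by simp
  have "{0..<3} = {0, 1, 2 :: nat}" by auto
  then have "F = {x, face_perm x, face_perm (face_perm x)}"
    using x(2) orbit_conv_funpow_dist1[OF in_face_self, of x] unfolding n
    by (simp add: numeral_2_eq_2)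
  moreover have "face_perm (face_perm (face_perm x)) = x"
    using funpow_dist1_prop[OF in_face_self, of x] unfolding n by (simp add: numeral_3_eq_3)
  moreover obtain a b where "x = (a, b)" by (cases x)
  moreover have "face_step rot x \<in> E" "face_step rot (face_step rot x) \<in> E"
    using x(1) face_step_dart by blast+
  ultimately have "F = {(a, b), (b, rot b a), (rot b a, a)}"
    using x(1) by (auto simp: face_perm_def face_step_def)
  moreover have "F \<subseteq> E" using x face_subset by blast
  ultimately show thesis using that by simp
qed

definition darts_leaving :: "('v \<times> 'v) set set \<Rightarrow> ('v \<times> 'v) set" where
  "darts_leaving \<Phi> = {x \<in> E. face x \<in> \<Phi> \<and> face (prod.swap x) \<notin> \<Phi>}"

text \<open>Summing over the faces of the region, the darts inside it cancel in pairs.\<close>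

lemma sum_darts_leaving:
  fixes d :: "'v \<times> 'v \<Rightarrow> 'a :: ab_group_add"
  assumes "\<Phi> \<subseteq> faces E rot"
    and anti: "\<And>x. x \<in> E \<Longrightarrow> d (prod.swap x) = - d x"
    and closed: "\<And>F. F \<in> \<Phi> \<Longrightarrow> (\<Sum>x\<in>F. d x) = 0"
  shows "(\<Sum>x\<in>darts_leaving \<Phi>. d x) = 0"
proof -
  define A where "A = {x. x \<in> E \<and> face x \<in> \<Phi>}"
  define I where "I = {x \<in> A. prod.swap x \<in> A}"
  have "finite A" "finite I" using finite_darts by (simp_all add: A_def I_def)
  have "darts_leaving \<Phi> = A - I" using swap_dart by (auto simp: darts_leaving_def A_def I_def)
  moreover have "sum d A = (\<Sum>F\<in>\<Phi>. sum d F)"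
    using sum_darts_in_faces[OF assms(1), of d] by (simp add: A_def)
  then have "sum d A = 0" using closed by simp
  moreover have "sum d I = 0"
    using \<open>finite I\<close> anti swap_dart_neq by (intro sum_swap_antisymmetric) (auto simp: I_def A_def)
  ultimately show ?thesis
    using sum.subset_diff[of I A d] \<open>finite A\<close> by (simp add: I_def)
qed

lemma single_dart_leaving:
  fixes d :: "'v \<times> 'v \<Rightarrow> 'a :: ab_group_add"
  assumes "\<Phi> \<subseteq> faces E rot"
    and "\<And>x. x \<in> E \<Longrightarrow> d (prod.swap x) = - d x"
    and "\<And>F. F \<in> \<Phi> \<Longrightarrow> (\<Sum>x\<in>F. d x) = 0"
    and "x0 \<in> darts_leaving \<Phi>" "\<And>x. x \<in> darts_leaving \<Phi> \<Longrightarrow> x \<noteq> x0 \<Longrightarrow> d x = 0"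
  shows "d x0 = 0"
proof -
  have "finite (darts_leaving \<Phi>)" using finite_darts by (simp add: darts_leaving_def)
  then have "(\<Sum>x\<in>darts_leaving \<Phi>. d x) = d x0"
    using assms(4,5) by (simp add: sum.remove)
  then show ?thesis using sum_darts_leaving[OF assms(1-3)] by simp
qed

lemma face_walk:
  assumes "x0 \<in> E" "y \<in> face x0"
  shows "(fst x0, fst y) \<in> (face x0)\<^sup>*"
proof -
  have iter: "(face_perm ^^ n) x0 \<in> face x0" for n
    using orbit_altdef_permutation[OF permutation_face_perm] by blast
  have "(fst x0, fst ((face_perm ^^ n) x0)) \<in> (face x0)\<^sup>*" for n
  proof (induction n)
    case (Suc n)
    let ?z = "(face_perm ^^ n) x0"
    have "?z \<in> E" using iter[of n] face_subset[OF assms(1)] by blast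
    then have "(fst ?z, fst ((face_perm ^^ Suc n) x0)) \<in> face x0"
      using iter[of n] fst_face_perm by simp
    with Suc.IH show ?case by (rule rtrancl_into_rtrancl)
  qed simp
  moreover obtain n where "y = (face_perm ^^ n) x0"
    using assms(2) orbit_altdef_permutation[OF permutation_face_perm] by blast
  ultimately show ?thesis by simp
qed

lemma face_boundary_subset:
  assumes "x0 \<in> E"
  shows "face x0 \<union> converse (face x0) \<subseteq> fst ` face x0 \<times> fst ` face x0"
proof -
  have "snd y \<in> fst ` face x0" if "y \<in> face x0" for y
    using that orbit.step[OF that] fst_face_perm face_subset[OF assms] by (metis image_eqI subsetD)
  then show ?thesis by force
qed

lemma connected_face_boundary:
  assumes "x0 \<in> E"
  shows "connected_graph (fst ` face x0) (face x0 \<union> converse (face x0))"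
proof -
  let ?B = "face x0 \<union> converse (face x0)"
  have "(fst x0, u) \<in> ?B\<^sup>*" if "u \<in> fst ` face x0" for u
    using that face_walk[OF assms] rtrancl_mono[of "face x0" ?B] by blast
  moreover have "sym (?B\<^sup>*)" by (intro sym_rtrancl) (auto simp: sym_def)
  ultimately have "(u, w) \<in> ?B\<^sup>*" if "u \<in> fst ` face x0" "w \<in> fst ` face x0" for u w
    using that by (meson rtrancl_trans symD)
  then show ?thesis using in_face_self[of x0] by (auto simp: connected_graph_def)
qed

lemma sum_remaining_face:
  fixes d :: "'v \<times> 'v \<Rightarrow> 'a :: ab_group_add"
  assumes anti: "\<And>x. x \<in> E \<Longrightarrow> d (prod.swap x) = - d x"
    and closed: "\<And>F. F \<in> faces E rot \<Longrightarrow> F \<noteq> F0 \<Longrightarrow> (\<Sum>x\<in>F. d x) = 0"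
    and "F0 \<in> faces E rot"
  shows "(\<Sum>x\<in>F0. d x) = 0"
proof -
  have "{x. x \<in> E \<and> face x \<in> faces E rot} = E" by (auto simp: faces_eq)
  then have "(\<Sum>F\<in>faces E rot. sum d F) = sum d E"
    using sum_darts_in_faces[of "faces E rot" d] by simp
  also have "\<dots> = 0"
    by (rule sum_swap_antisymmetric[OF finite_darts]) (simp_all add: swap_dart swap_dart_neq anti)
  also have "(\<Sum>F\<in>faces E rot. sum d F) = sum d F0"
    using closed assms(3) finite_faces by (simp add: sum.remove)
  finally show ?thesis .
qed

end

locale connected_rotation_graph = rotation_graph V E rot
  for V :: "'v set" and E :: "('v \<times> 'v) set" and rot :: "'v \<Rightarrow> 'v \<Rightarrow> 'v" +
  assumes connected: "connected_graph V E"
begin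

text \<open>Rotation around a vertex is the composite of reversal and face tracing, so a set of darts
  closed under both contains every dart at a vertex as soon as it contains one.\<close>

lemma swap_face_step_closed_eq:
  assumes "M \<subseteq> E" "M \<noteq> {}"
    and swap: "\<And>x. x \<in> M \<Longrightarrow> prod.swap x \<in> M"
    and step: "\<And>x. x \<in> M \<Longrightarrow> face_step rot x \<in> M"
  shows "M = E"
proof -
  have rot: "(v, (rot v ^^ n) u) \<in> M" if "(v, u) \<in> M" for v u n
  proof (induction n)
    case (Suc n)
    then have "face_step rot (prod.swap (v, (rot v ^^ n) u)) \<in> M" using swap step by blast
    then show ?case by (simp add: face_step_def)
  qed (simp add: that)
  have all_at: "(v, u) \<in> M" if "(v, u') \<in> M" "(v, u) \<in> E" for v u u'
  proof -
    have "v \<in> V" "u' \<in> nbrs E v" "u \<in> nbrs E v"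
      using that \<open>M \<subseteq> E\<close> darts_subset by (auto simp: nbrs_def)
    then obtain n where "(rot v ^^ n) u' = u" using rotation unfolding rotation_system_def by blast
    then show ?thesis using rot[OF that(1)] by blast
  qed
  obtain a b where ab: "(a, b) \<in> M" using assms(2) by auto
  have "(v, u) \<in> M" if "(a, v) \<in> E\<^sup>*" "(v, u) \<in> E" for v u
    using that
  proof (induction arbitrary: u rule: rtrancl_induct)
    case base
    then show ?case using all_at ab by blast
  next
    case (step p v)
    then have "(v, p) \<in> M" using swap[of "(p, v)"] swap_dart[of "(p, v)"] by auto
    then show ?case using all_at step.prems by blast
  qed
  moreover have "(a, v) \<in> E\<^sup>*" if "v \<in> V" for v
    using connected that ab \<open>M \<subseteq> E\<close> darts_subset by (auto simp: connected_graph_def)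
  ultimately show ?thesis using \<open>M \<subseteq> E\<close> darts_subset by auto
qed

lemma darts_leaving_nonempty:
  assumes "\<Phi> \<subseteq> faces E rot" "\<Phi> \<noteq> {}" "\<Phi> \<noteq> faces E rot"
  shows "darts_leaving \<Phi> \<noteq> {}"
proof
  assume none: "darts_leaving \<Phi> = {}"
  define M where "M = {x \<in> E. face x \<in> \<Phi>}"
  have "M = E"
  proof (rule swap_face_step_closed_eq)
    show "M \<subseteq> E" by (simp add: M_def)
    show "M \<noteq> {}" using assms(1,2) by (auto simp: M_def faces_eq)
    show "prod.swap x \<in> M" if "x \<in> M" for x
    proof -
      have "x \<notin> darts_leaving \<Phi>" using none by blast
      then show ?thesis using that swap_dart unfolding M_def darts_leaving_def by blast
    qed
    show "face_step rot x \<in> M" if "x \<in> M" for x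
    proof -
      have "face (face_perm x) = face x" using in_face_self face_eqI orbit.base by metis
      then show ?thesis using that face_step_dart by (simp add: M_def face_perm_def)
    qed
  qed
  then show False using assms(1,3) by (auto simp: M_def faces_eq)
qed

section \<open>A discrete Poincare lemma\<close>

definition dual_darts :: "('v \<times> 'v) set \<Rightarrow> (('v \<times> 'v) set \<times> ('v \<times> 'v) set) set" where
  "dual_darts N = (\<lambda>x. (face x, face (prod.swap x))) ` N"

definition exact_darts :: "('v \<times> 'v \<Rightarrow> 'a :: ab_group_add) \<Rightarrow> ('v \<Rightarrow> 'a) \<Rightarrow> ('v \<times> 'v) set" where
  "exact_darts \<delta> P = {x \<in> E. \<delta> x = P (snd x) - P (fst x)}"

text \<open>A potential with the most exact darts works: shifting it by a constant on one component
  of its exact darts would make one more dart exact.\<close>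

lemma exists_spanning_exact_darts:
  fixes \<delta> :: "'v \<times> 'v \<Rightarrow> 'a :: ab_group_add"
  assumes anti: "\<And>x. x \<in> E \<Longrightarrow> \<delta> (prod.swap x) = - \<delta> x"
  obtains P where "\<And>u w. u \<in> V \<Longrightarrow> w \<in> V \<Longrightarrow> (u, w) \<in> (exact_darts \<delta> P)\<^sup>*"
proof -
  have "card (exact_darts \<delta> P) < card E + 1" for P
    using card_mono[OF finite_darts, of "exact_darts \<delta> P"] by (auto simp: exact_darts_def)
  then obtain P where max: "\<And>P'. card (exact_darts \<delta> P') \<le> card (exact_darts \<delta> P)"
    using ex_has_greatest_nat[of "\<lambda>_. True" "\<lambda>_. 0" "\<lambda>P. card (exact_darts \<delta> P)" "card E + 1"]
    by blast
  have "(u, w) \<in> (exact_darts \<delta> P)\<^sup>*" if "u \<in> V" "w \<in> V" for u w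
  proof (rule ccontr)
    let ?S = "exact_darts \<delta> P"
    define W where "W = {v. (u, v) \<in> ?S\<^sup>*}"
    assume "(u, w) \<notin> ?S\<^sup>*"
    then have "u \<in> W" "w \<notin> W" by (auto simp: W_def)
    moreover have "(u, w) \<in> E\<^sup>*" using connected that by (simp add: connected_graph_def)
    ultimately obtain v v' where vv': "(v, v') \<in> E" "v \<in> W" "v' \<notin> W"
      using rtrancl_exit_edge by metis
    define P' where "P' y = (if y \<in> W then P y else P y + (\<delta> (v, v') - (P v' - P v)))" for y
    have "p \<in> W \<longleftrightarrow> q \<in> W" if "(p, q) \<in> ?S" for p q
    proof -
      have "(q, p) \<in> ?S" using that anti[of "(p, q)"] swap_dart[of "(p, q)"] by (auto simp: exact_darts_def)
      then show ?thesis using that by (auto simp: W_def intro: rtrancl_into_rtrancl)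
    qed
    then have "?S \<subseteq> exact_darts \<delta> P'" by (auto simp: exact_darts_def P'_def)
    moreover have "(v, v') \<in> exact_darts \<delta> P' - ?S"
      using vv' by (auto simp: exact_darts_def P'_def W_def intro: rtrancl_into_rtrancl)
    ultimately have "?S \<subset> exact_darts \<delta> P'" by blast
    moreover have "finite (exact_darts \<delta> P')" by (simp add: exact_darts_def finite_darts)
    ultimately have "card ?S < card (exact_darts \<delta> P')" by (simp add: psubset_card_mono)
    then show False using max[of P'] by simp
  qed
  then show thesis by (rule that)
qed

text \<open>Otherwise the coboundary of the indicator of one side of the bridge would have nonzero
  flux out of the region.\<close>

lemma bridge_not_only_leaving_dart:
  assumes "\<Phi> \<subseteq> faces E rot" "T \<subseteq> E" "sym T"
    and e: "e \<in> darts_leaving \<Phi>" "e \<in> T" and bridge: "(fst e, snd e) \<notin> (T - {e, prod.swap e})\<^sup>*"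
  shows "\<exists>x\<in>darts_leaving \<Phi>. x \<notin> T"
proof (rule ccontr)
  assume "\<not> ?thesis"
  then have in_T: "x \<in> T" if "x \<in> darts_leaving \<Phi>" for x using that by blast
  let ?T' = "T - {e, prod.swap e}"
  define Q :: "'v \<Rightarrow> int" where "Q v = (if (fst e, v) \<in> ?T'\<^sup>* then 1 else 0)" for v
  define \<chi> where "\<chi> x = Q (snd x) - Q (fst x)" for x
  have "\<chi> e = 0"
  proof (rule single_dart_leaving[OF assms(1) _ _ e(1)])
    show "\<chi> (prod.swap x) = - \<chi> x" for x by (cases x) (simp add: \<chi>_def)
    show "(\<Sum>x\<in>F. \<chi> x) = 0" if "F \<in> \<Phi>" for F
      unfolding \<chi>_def using that assms(1) by (intro sum_face_telescope) blast
    show "\<chi> x = 0" if x: "x \<in> darts_leaving \<Phi>" "x \<noteq> e" for x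
    proof -
      have "x \<noteq> prod.swap e" using x e(1) by (auto simp: darts_leaving_def)
      then have "x \<in> ?T'" "prod.swap x \<in> ?T'"
        using in_T[OF x(1)] x(2) \<open>sym T\<close> by (cases x, cases e, auto simp: sym_def)+
      then show ?thesis by (cases x) (auto simp: \<chi>_def Q_def intro: rtrancl_into_rtrancl)
    qed
  qed
  then show False using bridge by (simp add: \<chi>_def Q_def)
qed

lemma dual_connected_complement_forest:
  assumes "T \<subseteq> E" "sym T" and bridges: "\<And>e. e \<in> T \<Longrightarrow> (fst e, snd e) \<notin> (T - {e, prod.swap e})\<^sup>*"
    and "F \<in> faces E rot" "G \<in> faces E rot"
  shows "(F, G) \<in> (dual_darts (E - T))\<^sup>*"
proof (rule ccontr)
  define \<Phi> where "\<Phi> = {H \<in> faces E rot. (F, H) \<in> (dual_darts (E - T))\<^sup>*}"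
  assume "(F, G) \<notin> (dual_darts (E - T))\<^sup>*"
  then have "darts_leaving \<Phi> \<noteq> {}"
    using assms(4,5) by (intro darts_leaving_nonempty) (auto simp: \<Phi>_def)
  then obtain e where e: "e \<in> darts_leaving \<Phi>" by blast
  have in_T: "x \<in> T" if "x \<in> darts_leaving \<Phi>" for x
  proof (rule ccontr)
    assume "x \<notin> T"
    with that have "(face x, face (prod.swap x)) \<in> dual_darts (E - T)" "face x \<in> \<Phi>"
      by (auto simp: dual_darts_def darts_leaving_def \<Phi>_def)
    moreover have "face (prod.swap x) \<in> faces E rot"
      using that swap_dart by (simp add: faces_eq darts_leaving_def)
    ultimately have "face (prod.swap x) \<in> \<Phi>" by (auto simp: \<Phi>_def intro: rtrancl_into_rtrancl)
    then show False using that by (simp add: darts_leaving_def)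
  qed
  have "\<exists>x\<in>darts_leaving \<Phi>. x \<notin> T"
    using bridge_not_only_leaving_dart[OF _ assms(1,2) e in_T[OF e] bridges[OF in_T[OF e]]]
    by (auto simp: \<Phi>_def)
  then show False using in_T by blast
qed

lemma sym_dual_darts:
  assumes "\<And>x. x \<in> N \<Longrightarrow> prod.swap x \<in> N"
  shows "sym (dual_darts N)"
  using assms by (force simp: sym_def dual_darts_def)

lemma card_spanning_darts:
  assumes "T \<subseteq> E" "sym T" "\<And>u w. u \<in> V \<Longrightarrow> w \<in> V \<Longrightarrow> (u, w) \<in> T\<^sup>*"
  shows "2 * (card V - 1) \<le> card T"
proof -
  obtain v0 where "v0 \<in> V" using connected by (auto simp: connected_graph_def)
  show ?thesis
  proof (rule card_darts_connected[where s = fst and t = snd and r = prod.swap and root = v0])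
    show "(v0, v) \<in> {(fst x, snd x) | x. x \<in> T}\<^sup>*" if "v \<in> V" for v
      using assms(3)[OF \<open>v0 \<in> V\<close> that] by simp
  qed (use finite_vertices finite_subset[OF assms(1) finite_darts] \<open>v0 \<in> V\<close> assms(2) in
       \<open>auto simp: sym_def\<close>)
qed

lemma card_dual_spanning_darts:
  assumes "N \<subseteq> E" "\<And>x. x \<in> N \<Longrightarrow> prod.swap x \<in> N" "x0 \<in> E"
    and "\<And>G. G \<in> faces E rot \<Longrightarrow> (face x0, G) \<in> (dual_darts N)\<^sup>*"
  shows "2 * (card (faces E rot) - 1) \<le> card N"
proof (rule card_darts_connected[where s = face and t = "\<lambda>x. face (prod.swap x)" and r = prod.swap])
  have "{(face x, face (prod.swap x)) | x. x \<in> N} = dual_darts N"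
    unfolding dual_darts_def by blast
  then show "(face x0, G) \<in> {(face x, face (prod.swap x)) | x. x \<in> N}\<^sup>*" if "G \<in> faces E rot" for G
    using assms(4)[OF that] by simp
qed (use finite_faces finite_subset[OF assms(1) finite_darts] assms(2,3) in \<open>auto simp: faces_eq\<close>)

lemma dual_darts_remove_pair:
  assumes "\<And>x. x \<in> N \<Longrightarrow> prod.swap x \<in> N"
    and path: "(face x0, face (prod.swap x0)) \<in> (dual_darts (N - {x0, prod.swap x0}))\<^sup>*"
  shows "(dual_darts N)\<^sup>* \<subseteq> (dual_darts (N - {x0, prod.swap x0}))\<^sup>*"
proof -
  let ?N = "N - {x0, prod.swap x0}"
  have "prod.swap x \<in> ?N" if "x \<in> ?N" for x
    using that assms(1)[of x] by (cases x0, cases x) auto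
  then have path_back: "(face (prod.swap x0), face x0) \<in> (dual_darts ?N)\<^sup>*"
    using symD[OF sym_rtrancl[OF sym_dual_darts] path] by blast
  have "p \<in> (dual_darts ?N)\<^sup>*" if p: "p \<in> dual_darts N" for p
  proof -
    obtain x where x: "x \<in> N" "p = (face x, face (prod.swap x))"
      using p unfolding dual_darts_def by blast
    then consider "x = x0" | "x = prod.swap x0" | "x \<in> ?N" by blast
    then show ?thesis
    proof cases
      case 3
      then have "p \<in> dual_darts ?N" using x(2) by (auto simp: dual_darts_def)
      then show ?thesis by blast
    qed (use x(2) path path_back in simp_all)
  qed
  then show ?thesis using rtrancl_subset_rtrancl by blast
qed

lemma card_remove_swap_pair:
  assumes "N \<subseteq> E" "x0 \<in> N" "prod.swap x0 \<in> N"
  shows "card N = card (N - {x0, prod.swap x0}) + 2"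
proof -
  have sub: "{x0, prod.swap x0} \<subseteq> N" using assms(2,3) by simp
  have "card (N - {x0, prod.swap x0}) = card N - card {x0, prod.swap x0}"
    by (rule card_Diff_subset[OF _ sub]) simp
  moreover have "card {x0, prod.swap x0} \<le> card N"
    using assms(1) finite_darts finite_subset by (intro card_mono[OF _ sub]) blast
  moreover have "prod.swap x0 \<noteq> x0" using assms(1,2) swap_dart_neq by blast
  then have "card {x0, prod.swap x0} = 2" by simp
  ultimately show ?thesis by simp
qed

text \<open>By Euler's formula a spanning tree and a dual spanning tree on the complementary darts
  already use up all darts, so no dart of the complement of a spanning tree can be removed
  without disconnecting the dual.\<close>

lemma cotree_dart_dual_bridge:
  assumes euler: "card V + card (faces E rot) = card E div 2 + 2"
    and T: "T \<subseteq> E" "sym T" "\<And>u w. u \<in> V \<Longrightarrow> w \<in> V \<Longrightarrow> (u, w) \<in> T\<^sup>*"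
    and bridges: "\<And>e. e \<in> T \<Longrightarrow> (fst e, snd e) \<notin> (T - {e, prod.swap e})\<^sup>*"
    and x0: "x0 \<in> E - T"
  shows "(face x0, face (prod.swap x0)) \<notin> (dual_darts (E - T - {x0, prod.swap x0}))\<^sup>*"
proof
  let ?N = "E - T - {x0, prod.swap x0}"
  assume path: "(face x0, face (prod.swap x0)) \<in> (dual_darts ?N)\<^sup>*"
  have swap_T: "prod.swap x \<in> T \<longleftrightarrow> x \<in> T" for x
    using \<open>sym T\<close> by (cases x) (auto simp: sym_def)
  have swap_cotree: "prod.swap x \<in> E - T" if "x \<in> E - T" for x
    using that swap_dart swap_T by blast
  have swap_N: "prod.swap x \<in> ?N" if "x \<in> ?N" for x
    using that swap_dart swap_T by (cases x0, cases x) auto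
  have "face x0 \<in> faces E rot" using x0 by (simp add: faces_eq)
  then have "(face x0, G) \<in> (dual_darts ?N)\<^sup>*" if "G \<in> faces E rot" for G
    using dual_connected_complement_forest[OF T(1,2) bridges _ that]
      dual_darts_remove_pair[OF swap_cotree path] by blast
  then have "2 * (card (faces E rot) - 1) \<le> card ?N"
    using x0 by (intro card_dual_spanning_darts[OF _ swap_N]) auto
  moreover have "2 * (card V - 1) \<le> card T" using T by (rule card_spanning_darts)
  moreover have "card E = card T + card ?N + 2"
  proof -
    have "finite T" using T(1) finite_darts finite_subset by blast
    then have "card (E - T) = card E - card T" "card T \<le> card E"
      using T(1) finite_darts by (simp_all add: card_Diff_subset card_mono)
    then show ?thesis using card_remove_swap_pair[of "E - T" x0] x0 swap_cotree[OF x0] by simp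
  qed
  moreover have "even (card E)"
    using finite_darts swap_dart swap_dart_neq by (intro even_card_swap_closed) auto
  moreover have "card V \<ge> 1" "card (faces E rot) \<ge> 1"
    using connected finite_vertices finite_faces x0
    by (auto simp: Suc_le_eq card_gt_0_iff faces_eq connected_graph_def)
  ultimately show False using euler by (elim evenE) linarith
qed

text \<open>Every dart outside a spanning tree is a dual bridge, so it is the only dart of the
  tree complement leaving the region it bounds in the dual; all other darts leaving that
  region lie in the tree.\<close>

lemma vanishing_on_spanning_tree:
  fixes d :: "'v \<times> 'v \<Rightarrow> 'a :: ab_group_add"
  assumes euler: "card V + card (faces E rot) = card E div 2 + 2"
    and T: "T \<subseteq> E" "sym T" "\<And>u w. u \<in> V \<Longrightarrow> w \<in> V \<Longrightarrow> (u, w) \<in> T\<^sup>*"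
    and bridges: "\<And>e. e \<in> T \<Longrightarrow> (fst e, snd e) \<notin> (T - {e, prod.swap e})\<^sup>*"
    and anti: "\<And>x. x \<in> E \<Longrightarrow> d (prod.swap x) = - d x"
    and closed: "\<And>F. F \<in> faces E rot \<Longrightarrow> (\<Sum>x\<in>F. d x) = 0"
    and d_T: "\<And>x. x \<in> T \<Longrightarrow> d x = 0"
    and x0: "x0 \<in> E"
  shows "d x0 = 0"
proof (cases "x0 \<in> T")
  case False
  let ?N = "E - T - {x0, prod.swap x0}"
  define \<Phi> where "\<Phi> = {G \<in> faces E rot. (face x0, G) \<in> (dual_darts ?N)\<^sup>*}"
  have "face (prod.swap x0) \<notin> \<Phi>"
    using cotree_dart_dual_bridge[OF euler T bridges] x0 False by (simp add: \<Phi>_def)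
  then have x0_leaving: "x0 \<in> darts_leaving \<Phi>"
    using x0 by (simp add: darts_leaving_def \<Phi>_def faces_eq)
  have others: "d x = 0" if x: "x \<in> darts_leaving \<Phi>" "x \<noteq> x0" for x
  proof -
    have "x \<notin> ?N"
    proof
      assume "x \<in> ?N"
      then have "(face x, face (prod.swap x)) \<in> dual_darts ?N" by (auto simp: dual_darts_def)
      moreover have "face (prod.swap x) \<in> faces E rot"
        using x swap_dart by (simp add: darts_leaving_def faces_eq)
      ultimately show False
        using x by (auto simp: darts_leaving_def \<Phi>_def intro: rtrancl_into_rtrancl)
    qed
    moreover have "face x0 \<in> \<Phi>" using x0 by (simp add: \<Phi>_def faces_eq)
    then have "x \<noteq> prod.swap x0" using x(1) by (auto simp: darts_leaving_def)
    ultimately have "x \<in> T" using x unfolding darts_leaving_def by blast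
    then show ?thesis by (rule d_T)
  qed
  show ?thesis
  proof (rule single_dart_leaving[where d = d, OF _ anti _ x0_leaving others])
    show "\<Phi> \<subseteq> faces E rot" by (auto simp: \<Phi>_def)
    show "(\<Sum>x\<in>F. d x) = 0" if "F \<in> \<Phi>" for F using that closed by (simp add: \<Phi>_def)
  qed
qed (rule d_T)

theorem exists_potential:
  fixes \<delta> :: "'v \<times> 'v \<Rightarrow> 'a :: ab_group_add"
  assumes euler: "card V + card (faces E rot) = card E div 2 + 2"
    and anti: "\<And>x. x \<in> E \<Longrightarrow> \<delta> (prod.swap x) = - \<delta> x"
    and closed: "\<And>F. F \<in> faces E rot \<Longrightarrow> F \<noteq> F0 \<Longrightarrow> (\<Sum>x\<in>F. \<delta> x) = 0"
  obtains P where "\<And>x. x \<in> E \<Longrightarrow> \<delta> x = P (snd x) - P (fst x)"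
proof -
  obtain P where span: "\<And>u w. u \<in> V \<Longrightarrow> w \<in> V \<Longrightarrow> (u, w) \<in> (exact_darts \<delta> P)\<^sup>*"
    using exists_spanning_exact_darts[of \<delta>] anti by blast
  have fin: "finite (exact_darts \<delta> P)" by (simp add: exact_darts_def finite_darts)
  have symm: "sym (exact_darts \<delta> P)"
  proof (rule symI)
    fix u w assume "(u, w) \<in> exact_darts \<delta> P"
    then show "(w, u) \<in> exact_darts \<delta> P"
      using anti[of "(u, w)"] swap_dart[of "(u, w)"] by (simp add: exact_darts_def)
  qed
  obtain T where T: "T \<subseteq> exact_darts \<delta> P" "sym T"
      "\<And>u w. u \<in> V \<Longrightarrow> w \<in> V \<Longrightarrow> (u, w) \<in> T\<^sup>*"
    and bridges: "\<And>e. e \<in> T \<Longrightarrow> (fst e, snd e) \<notin> (T - {e, prod.swap e})\<^sup>*"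
    using exists_minimal_spanning_subset[OF fin symm span] by blast
  have "T \<subseteq> E" using T(1) by (auto simp: exact_darts_def)
  define d where "d x = \<delta> x - (P (snd x) - P (fst x))" for x
  have "d x = 0" if "x \<in> E" for x
  proof (rule vanishing_on_spanning_tree[OF euler \<open>T \<subseteq> E\<close> T(2,3) bridges _ _ _ that])
    show "d (prod.swap x) = - d x" if "x \<in> E" for x
      using anti[OF that] by (cases x) (simp add: d_def)
    show "(\<Sum>x\<in>F. d x) = 0" if F: "F \<in> faces E rot" for F
    proof -
      have "(\<Sum>x\<in>F. \<delta> x) = 0"
        using sum_remaining_face[of \<delta> F] anti closed F by (cases "F = F0") blast+
      then show ?thesis using sum_face_telescope[OF F, of P] by (simp add: d_def sum_subtractf)
    qed
    show "d x = 0" if "x \<in> T" for x using that T(1) by (auto simp: d_def exact_darts_def)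
  qed
  then show thesis using that by (simp add: d_def)
qed

end

section \<open>The dappled triangular grid\<close>

lemma all_3: "(\<forall>x :: 3. P x) \<longleftrightarrow> P 0 \<and> P 1 \<and> P 2"
proof -
  have "x = 0 \<or> x = 1 \<or> x = 2" for x :: 3
  proof (induction x)
    case (of_int z)
    then have "z = 0 \<or> z = 1 \<or> z = 2" by auto
    then show ?case by auto
  qed
  then show ?thesis by metis
qed

lemma all_2: "(\<forall>x :: 2. P x) \<longleftrightarrow> P 0 \<and> P 1"
proof -
  have "x = 0 \<or> x = 1" for x :: 2
  proof (induction x)
    case (of_int z)
    then have "z = 0 \<or> z = 1" by auto
    then show ?case by auto
  qed
  then show ?thesis by metis
qed

lemma T_hue_diff: "T_hue (p - q) = T_hue p - T_hue q"
  by (simp add: T_hue_def algebra_simps)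

lemma T_color_add: "T_color (p + q) = T_color p + T_color q"
  by (simp add: T_color_def)

lemma T_color_diff: "T_color (p - q) = T_color p - T_color q"
  by (simp add: T_color_def)

definition grid_dirs :: "(int \<times> int) set" where
  "grid_dirs = {(1, 0), (-1, 0), (0, 1), (0, -1), (1, 1), (-1, -1)}"

lemma T_adj_iff: "T_adj p q \<longleftrightarrow> q - p \<in> grid_dirs"
  by (simp add: T_adj_def grid_dirs_def prod_eq_iff)

definition grid_step :: "3 \<Rightarrow> 2 \<times> 2 \<Rightarrow> int \<times> int" where
  "grid_step h c =
    (let s = (if c = (1, 0) then (1, 0) else if c = (0, 1) then (0, 1) else (-1, -1))
     in if h = 1 then s else - s)"

lemma grid_step_in_dirs: "grid_step h c \<in> grid_dirs"
  by (simp add: grid_step_def grid_dirs_def Let_def)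

lemma T_hue_T_color_grid_step:
  assumes "h \<noteq> 0" "c \<noteq> 0"
  shows "T_hue (grid_step h c) = h" "T_color (grid_step h c) = c"
proof -
  have "\<forall>h c. h \<noteq> 0 \<longrightarrow> c \<noteq> 0 \<longrightarrow> T_hue (grid_step h c) = h \<and> T_color (grid_step h c) = c"
    by (simp add: all_3 split_paired_All all_2 Let_def zero_prod_def grid_step_def T_hue_def T_color_def)
  then show "T_hue (grid_step h c) = h" "T_color (grid_step h c) = c" using assms by blast+
qed

lemma grid_step_T_hue_T_color: "s \<in> grid_dirs \<Longrightarrow> grid_step (T_hue s) (T_color s) = s"
  by (auto simp: grid_dirs_def grid_step_def T_hue_def T_color_def)

lemma grid_step_uminus: "h \<noteq> 0 \<Longrightarrow> grid_step (- h) (- c) = - grid_step h c"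
proof -
  have "\<forall>h c. h \<noteq> 0 \<longrightarrow> grid_step (- h) (- c) = - grid_step h c"
    by (simp add: all_3 split_paired_All all_2 Let_def zero_prod_def grid_step_def)
  then show "h \<noteq> 0 \<Longrightarrow> ?thesis" by blast
qed

lemma grid_step_triangle:
  fixes x y z :: 3 and cx cy cz :: "2 \<times> 2"
  assumes "x \<noteq> y" "y \<noteq> z" "z \<noteq> x" "cx \<noteq> cy" "cy \<noteq> cz" "cz \<noteq> cx"
  shows "grid_step (y - x) (cy - cx) + grid_step (z - y) (cz - cy) + grid_step (x - z) (cx - cz) = 0"
proof -
  have "\<forall>h1 h2 c1 c2. h1 \<noteq> 0 \<longrightarrow> h2 \<noteq> 0 \<longrightarrow> h1 + h2 \<noteq> 0 \<longrightarrow> c1 \<noteq> 0 \<longrightarrow> c2 \<noteq> 0 \<longrightarrow> c1 + c2 \<noteq> 0 \<longrightarrow>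
      grid_step h1 c1 + grid_step h2 c2 + grid_step (- (h1 + h2)) (- (c1 + c2)) = 0"
    by (simp add: all_3 split_paired_All all_2 Let_def zero_prod_def grid_step_def)
  from this[rule_format, of "y - x" "z - y" "cy - cx" "cz - cy"]
  have "grid_step (y - x) (cy - cx) + grid_step (z - y) (cz - cy)
      + grid_step (- (y - x + (z - y))) (- (cy - cx + (cz - cy))) = 0"
    using assms by (simp add: eq_commute[of 0])
  then show ?thesis by (simp add: algebra_simps)
qed

lemma T_hue_eq_0_iff: "T_hue p = 0 \<longleftrightarrow> (fst p + snd p) mod 3 = 0"
proof -
  have "T_hue p = 0 \<longleftrightarrow> int CHAR(3) dvd fst p + snd p"
    unfolding T_hue_def by (rule of_int_eq_0_iff_char_dvd)
  then show ?thesis by (simp add: dvd_eq_mod_eq_0)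
qed

text \<open>The hexagon around the origin has antipodal vertices of equal colour, represented by
  the directions (1, 0), (0, 1) and (1, 1).  The points of nonzero hue are sent to one of them
  according to the sector (of six, three per hue) containing them.\<close>

fun sector_dir :: "int \<times> int \<Rightarrow> int \<times> int" where
  "sector_dir (i, j) =
    (if (i + j) mod 3 = 1 then
       if 0 \<le> i \<and> j \<le> i then (1, 0) else if 0 \<le> j \<and> i \<le> j then (0, 1) else (1, 1)
     else
       if 0 \<le> i \<and> 0 \<le> j then (1, 1) else if i \<le> 0 \<and> i \<le> j then (1, 0) else (0, 1))"

lemma sector_dir_cases: "sector_dir p \<in> {(1, 0), (0, 1), (1, 1)}"
  by (cases p) simp

lemma sector_dir_grid_dirs: "s \<in> grid_dirs \<Longrightarrow> T_color (sector_dir s) = T_color s"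
  by (auto simp: grid_dirs_def T_color_def)

lemma sector_dir_up_neighbours:
  assumes "(i + j) mod 3 = 1" "s \<in> {(1, 0), (0, 1), (-1, -1)}"
  shows "sector_dir (i, j) \<noteq> sector_dir (i + fst s, j + snd s)"
proof -
  have "(i + fst s + (j + snd s)) mod 3 = 2" using assms by auto presburger+
  then show ?thesis using assms by (auto split: if_splits)
qed

lemma sector_dir_adj:
  assumes "T_hue p \<noteq> 0" "T_hue q \<noteq> 0" "T_adj p q"
  shows "sector_dir p \<noteq> sector_dir q"
proof -
  obtain i j where p: "p = (i, j)" by (cases p)
  obtain a b where ab: "(a, b) \<in> grid_dirs" "q = (i + a, j + b)"
    using assms(3) p by (cases q) (auto simp: T_adj_iff)
  have hues: "(i + j) mod 3 \<noteq> 0" "(i + a + (j + b)) mod 3 \<noteq> 0"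
    using assms(1,2) by (simp_all add: T_hue_eq_0_iff p ab(2))
  show ?thesis
  proof (cases "(a, b) \<in> {(1, 0), (0, 1), (-1, -1)}")
    case True
    then have "(i + j) mod 3 = 1" using hues by auto presburger+
    then show ?thesis using sector_dir_up_neighbours[OF _ True] by (simp add: p ab(2))
  next
    case False
    then have up: "(- a, - b) \<in> {(1, 0), (0, 1), (-1, -1)}" using ab(1) by (auto simp: grid_dirs_def)
    then have "(i + a + (j + b)) mod 3 = 1" using hues by auto presburger+
    then have "sector_dir (i + a, j + b) \<noteq> sector_dir (i, j)"
      using sector_dir_up_neighbours[OF _ up, of "i + a" "j + b"] by (simp del: sector_dir.simps)
    then show ?thesis by (simp add: p ab(2) del: sector_dir.simps)
  qed
qed

definition retract_color :: "int \<times> int \<Rightarrow> int \<times> int \<Rightarrow> 2 \<times> 2" where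
  "retract_color z p = T_color z + T_color (sector_dir (p - z))"

lemma retract_color_neq_center: "retract_color z p \<noteq> T_color z"
  using sector_dir_cases[of "p - z"] by (auto simp: retract_color_def T_color_def zero_prod_def)

lemma retract_color_adj:
  assumes "T_hue p \<noteq> T_hue z" "T_hue q \<noteq> T_hue z" "T_adj p q"
  shows "retract_color z p \<noteq> retract_color z q"
proof -
  have "sector_dir (p - z) \<noteq> sector_dir (q - z)"
    using assms by (intro sector_dir_adj) (simp_all add: T_hue_diff T_adj_iff)
  then show ?thesis
    using sector_dir_cases[of "p - z"] sector_dir_cases[of "q - z"]
    by (auto simp: retract_color_def T_color_def)
qed

lemma retract_color_hexagon: "T_adj z p \<Longrightarrow> retract_color z p = T_color p"
  by (simp add: retract_color_def T_adj_iff sector_dir_grid_dirs flip: T_color_add)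

lemma grid_dirs_hue_color_neq_0: "s \<in> grid_dirs \<Longrightarrow> T_hue s \<noteq> 0 \<and> T_color s \<noteq> 0"
  by (auto simp: grid_dirs_def T_hue_def T_color_def zero_prod_def)

lemma T_adj_hue_color_neq: "T_adj p q \<Longrightarrow> T_hue q \<noteq> T_hue p \<and> T_color q \<noteq> T_color p"
  using grid_dirs_hue_color_neq_0[of "q - p"] by (simp add: T_adj_iff T_hue_diff T_color_diff)

section \<open>Colourings of hued patches\<close>

lemma dappled_hom_T_step:
  assumes "dappled_hom_T V E hue col f" "(u, w) \<in> E" "u \<in> V" "w \<in> V"
  shows "f w - f u = grid_step (hue w - hue u) (col w - col u)"
proof -
  have "f w - f u \<in> grid_dirs" using assms(1,2) by (auto simp: dappled_hom_T_def T_adj_iff)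
  then show ?thesis
    using assms(1,3,4) grid_step_T_hue_T_color[of "f w - f u"]
    by (simp add: dappled_hom_T_def T_hue_diff T_color_diff)
qed

lemma connected_graph_const:
  assumes "connected_graph V E" "\<And>u w. (u, w) \<in> E \<Longrightarrow> f u = f w" "u \<in> V" "w \<in> V"
  shows "f u = f w"
proof -
  have "(u, w) \<in> E\<^sup>*" using assms(1,3,4) by (simp add: connected_graph_def)
  then show ?thesis using assms(2) by (induction rule: rtrancl_induct) auto
qed

lemma dappled_hom_T_eq:
  assumes "dappled_hom_T V E hue col f" "dappled_hom_T V E hue col f'"
    and "E \<subseteq> V \<times> V" "connected_graph V E" "v0 \<in> V" "f v0 = f' v0" "v \<in> V"
  shows "f v = f' v"
proof -
  have "f u - f' u = f w - f' w" if "(u, w) \<in> E" for u w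
    using that assms(3) dappled_hom_T_step[OF assms(1) that] dappled_hom_T_step[OF assms(2) that]
    by (auto simp: algebra_simps)
  then have "f v0 - f' v0 = f v - f' v"
    using connected_graph_const[OF assms(4), of "\<lambda>v. f v - f' v"] assms(5,7) by blast
  then show ?thesis using assms(6) by simp
qed

lemma single_hexagon_central_iff:
  assumes "single_hexagon_coloring W F hue \<phi> c k" "v \<in> W"
  shows "hue v = c \<longleftrightarrow> \<phi> v = k"
proof -
  obtain f z where "dappled_hom_T W F hue \<phi> f" "f ` W \<subseteq> hexagon z" "T_hue z = c" "T_color z = k"
    using assms(1) by (auto simp: single_hexagon_coloring_def)
  then show ?thesis
    using assms(2) T_adj_hue_color_neq[of z "f v"] by (force simp: dappled_hom_T_def hexagon_def)
qed

lemma patch_connected_rotation_graph: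
  assumes "patch V E rot Out"
  shows "connected_rotation_graph V E rot"
  using assms by unfold_locales (simp_all add: patch_def plane_graph_def)

lemma patch_boundary:
  assumes "patch V E rot Out"
  shows "bdry_V V Out \<subseteq> V" "bdry_E Out \<subseteq> E" "bdry_E Out \<subseteq> bdry_V V Out \<times> bdry_V V Out"
    and "connected_graph (bdry_V V Out) (bdry_E Out)"
proof -
  interpret connected_rotation_graph V E rot using patch_connected_rotation_graph[OF assms] .
  have "bdry_V V Out \<subseteq> V \<and> bdry_E Out \<subseteq> E \<and> bdry_E Out \<subseteq> bdry_V V Out \<times> bdry_V V Out
    \<and> connected_graph (bdry_V V Out) (bdry_E Out)"
  proof (cases "E = {}")
    case True
    then show ?thesis using assms connected by (simp add: patch_def bdry_V_def bdry_E_def)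
  next
    case False
    then obtain x0 where x0: "x0 \<in> E" "Out = face x0" using assms by (auto simp: patch_def faces_eq)
    then have "bdry_V V Out = fst ` face x0" "bdry_E Out = face x0 \<union> converse (face x0)"
      using in_face_self[of x0] by (auto simp: bdry_V_def bdry_E_def)
    moreover have "face x0 \<union> converse (face x0) \<subseteq> E"
      using face_subset[OF x0(1)] swap_dart by auto
    ultimately show ?thesis
      using face_boundary_subset[OF x0(1)] connected_face_boundary[OF x0(1)] darts_subset by auto
  qed
  then show "bdry_V V Out \<subseteq> V" "bdry_E Out \<subseteq> E" "bdry_E Out \<subseteq> bdry_V V Out \<times> bdry_V V Out"
    and "connected_graph (bdry_V V Out) (bdry_E Out)" by blast+
qed

lemma patch_grid_potential:
  assumes "patch V E rot Out" "proper_col V E hue" "proper_col V E g"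
  obtains P where "\<And>u w. (u, w) \<in> E \<Longrightarrow> P w - P u = grid_step (hue w - hue u) (g w - g u)"
proof (cases "E = {}")
  case False
  interpret connected_rotation_graph V E rot using patch_connected_rotation_graph[OF assms(1)] .
  define \<delta> where "\<delta> x = grid_step (hue (snd x) - hue (fst x)) (g (snd x) - g (fst x))" for x
  have proper: "hue u \<noteq> hue w" "g u \<noteq> g w" if "(u, w) \<in> E" for u w
    using assms(2,3) that by (auto simp: proper_col_def)
  have "\<delta> (prod.swap x) = - \<delta> x" if "x \<in> E" for x
  proof (cases x)
    case (Pair u w)
    then have "hue w - hue u \<noteq> 0" using proper(1)[of u w] that by auto
    then show ?thesis using grid_step_uminus[of "hue w - hue u" "g w - g u"] by (simp add: \<delta>_def Pair)
  qed
  moreover have "(\<Sum>x\<in>F. \<delta> x) = 0" if F: "F \<in> faces E rot" "F \<noteq> Out" for F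
  proof -
    have "card F = 3" using F assms(1) False by (simp add: patch_def)
    then obtain a b c where abc: "F = {(a, b), (b, c), (c, a)}"
      and E: "(a, b) \<in> E" "(b, c) \<in> E" "(c, a) \<in> E"
      using triangular_face F(1) by blast
    then have "a \<noteq> b" "b \<noteq> c" "c \<noteq> a" using swap_dart_neq by fastforce+
    then have "(\<Sum>x\<in>F. \<delta> x) = \<delta> (a, b) + \<delta> (b, c) + \<delta> (c, a)"
      by (simp add: abc add.assoc)
    also have "\<dots> = 0"
      unfolding \<delta>_def using grid_step_triangle proper[OF E(1)] proper[OF E(2)] proper[OF E(3)] by simp
    finally show ?thesis .
  qed
  moreover have "card V + card (faces E rot) = card E div 2 + 2"
    using assms(1) False by (simp add: patch_def plane_graph_def)
  ultimately obtain P where "\<And>x. x \<in> E \<Longrightarrow> \<delta> x = P (snd x) - P (fst x)"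
    using exists_potential by blast
  then show thesis using that by (force simp: \<delta>_def)
qed (use that in blast)

lemma patch_coloring_lifts:
  assumes "patch V E rot Out" "proper_col V E hue" "proper_col V E g"
    and "v0 \<in> V" "T_hue p0 = hue v0" "T_color p0 = g v0"
  obtains P where "dappled_hom_T V E hue g P" "P v0 = p0"
proof -
  obtain P0 where P0: "\<And>u w. (u, w) \<in> E \<Longrightarrow> P0 w - P0 u = grid_step (hue w - hue u) (g w - g u)"
    using patch_grid_potential[OF assms(1-3)] by blast
  define P where "P v = P0 v + (p0 - P0 v0)" for v
  have step: "P w - P u = grid_step (hue w - hue u) (g w - g u)" if "(u, w) \<in> E" for u w
    using P0[OF that] by (simp add: P_def algebra_simps)
  have "(T_hue (P v) - hue v, T_color (P v) - g v) = (T_hue (P v0) - hue v0, T_color (P v0) - g v0)"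
    if "v \<in> V" for v
  proof (rule connected_graph_const[where f = "\<lambda>v. (T_hue (P v) - hue v, T_color (P v) - g v)"])
    show "connected_graph V E" using assms(1) by (simp add: patch_def plane_graph_def)
    fix u w assume "(u, w) \<in> E"
    moreover have "hue w - hue u \<noteq> 0" "g w - g u \<noteq> 0"
      using assms(2,3) calculation by (auto simp: proper_col_def)
    ultimately have "T_hue (P w - P u) = hue w - hue u" "T_color (P w - P u) = g w - g u"
      using step T_hue_T_color_grid_step by simp_all
    then show "(T_hue (P u) - hue u, T_color (P u) - g u) = (T_hue (P w) - hue w, T_color (P w) - g w)"
      by (simp add: T_hue_diff T_color_diff algebra_simps)
  qed (use that assms(4) in simp_all)
  moreover have "P v0 = p0" by (simp add: P_def)
  ultimately have "T_hue (P v) = hue v \<and> T_color (P v) = g v" if "v \<in> V" for v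
    using that assms(5,6) by simp
  moreover have "T_adj (P u) (P w)" if "(u, w) \<in> E" for u w
    using step[OF that] grid_step_in_dirs by (simp add: T_adj_iff)
  ultimately have "dappled_hom_T V E hue g P" by (auto simp: dappled_hom_T_def)
  then show thesis using that \<open>P v0 = p0\<close> by blast
qed

lemma patch_coloring_extends_boundary_hom:
  assumes "patch V E rot Out" "proper_col V E hue" "proper_col V E g"
    and f: "dappled_hom_T (bdry_V V Out) (bdry_E Out) hue \<phi> f"
    and g: "\<And>v. v \<in> bdry_V V Out \<Longrightarrow> g v = \<phi> v"
  obtains P where "dappled_hom_T V E hue g P" "\<And>v. v \<in> bdry_V V Out \<Longrightarrow> P v = f v"
proof -
  let ?W = "bdry_V V Out" and ?F = "bdry_E Out"
  note bdry = patch_boundary[OF assms(1)]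
  obtain v0 where v0: "v0 \<in> ?W" using bdry(4) by (auto simp: connected_graph_def)
  then have "v0 \<in> V" "T_hue (f v0) = hue v0" "T_color (f v0) = g v0"
    using f g bdry(1) by (auto simp: dappled_hom_T_def)
  then obtain P where P: "dappled_hom_T V E hue g P" "P v0 = f v0"
    using patch_coloring_lifts[OF assms(1-3)] by metis
  have PW: "dappled_hom_T ?W ?F hue \<phi> P"
    using P(1) bdry(1,2) g unfolding dappled_hom_T_def by (metis subsetD)
  have "P v = f v" if "v \<in> ?W" for v
    using dappled_hom_T_eq[OF PW f bdry(3,4) v0 P(2) that] .
  with P(1) show thesis by (rule that)
qed

lemma noncentral_coloring_of_coloring:
  assumes "patch V E rot Out" "proper_col V E hue"
    and "single_hexagon_coloring (bdry_V V Out) (bdry_E Out) hue \<phi> c k"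
    and "proper_col V E g" "\<And>v. v \<in> bdry_V V Out \<Longrightarrow> g v = \<phi> v"
  defines "VH \<equiv> {v \<in> V. hue v \<noteq> c}"
  shows "\<exists>h. proper_col VH (E \<inter> (VH \<times> VH)) h \<and> (\<forall>v\<in>VH. h v \<in> UNIV - {k}) \<and>
    (\<forall>v\<in>VH \<inter> bdry_V V Out. h v = \<phi> v)"
proof -
  obtain f z where f: "dappled_hom_T (bdry_V V Out) (bdry_E Out) hue \<phi> f"
    and hex: "f ` bdry_V V Out \<subseteq> hexagon z" and z: "T_hue z = c" "T_color z = k"
    using assms(3) by (auto simp: single_hexagon_coloring_def)
  obtain P where P: "dappled_hom_T V E hue g P" and Pf: "\<And>v. v \<in> bdry_V V Out \<Longrightarrow> P v = f v"
    using patch_coloring_extends_boundary_hom[OF assms(1,2,4) f assms(5)] by blast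
  have "retract_color z (P u) \<noteq> retract_color z (P w)" if "(u, w) \<in> E" "u \<in> VH" "w \<in> VH" for u w
  proof -
    have "T_adj (P u) (P w)" "T_hue (P u) = hue u" "T_hue (P w) = hue w"
      using P that by (auto simp: dappled_hom_T_def VH_def)
    then show ?thesis using that z(1) retract_color_adj by (simp add: VH_def)
  qed
  moreover have "retract_color z (P v) = \<phi> v" if v: "v \<in> VH \<inter> bdry_V V Out" for v
  proof -
    have "T_hue (f v) \<noteq> T_hue z" "f v \<in> hexagon z"
      using v f hex z(1) by (auto simp: dappled_hom_T_def VH_def)
    then have "T_adj z (f v)" by (auto simp: hexagon_def)
    then show ?thesis using Pf v f retract_color_hexagon by (auto simp: dappled_hom_T_def)
  qed
  ultimately show ?thesis
    using retract_color_neq_center[of z] z(2)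
    by (intro exI[of _ "\<lambda>v. retract_color z (P v)"]) (auto simp: proper_col_def)
qed

lemma coloring_of_noncentral_coloring:
  fixes V :: "'v set" and hue :: "'v \<Rightarrow> 3" and c :: 3
  defines "VH \<equiv> {v \<in> V. hue v \<noteq> c}"
  assumes "E \<subseteq> V \<times> V" "proper_col V E hue" "W \<subseteq> V"
    and "single_hexagon_coloring W F hue \<phi> c k"
    and "proper_col VH (E \<inter> (VH \<times> VH)) h" "\<And>v. v \<in> VH \<Longrightarrow> h v \<noteq> k"
    and "\<And>v. v \<in> VH \<inter> W \<Longrightarrow> h v = \<phi> v"
  shows "\<exists>g. proper_col V E g \<and> (\<forall>v\<in>W. g v = \<phi> v)"
proof (intro exI conjI ballI)
  let ?g = "\<lambda>v. if hue v = c then k else h v"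
  have "?g u \<noteq> ?g w" if "(u, w) \<in> E" for u w
  proof -
    have "u \<in> V" "w \<in> V" "hue u \<noteq> hue w" using that assms(2,3) by (auto simp: proper_col_def)
    then show ?thesis using that assms(6,7) by (auto simp: proper_col_def VH_def)
  qed
  then show "proper_col V E ?g" unfolding proper_col_def by fast
  show "?g v = \<phi> v" if "v \<in> W" for v
    using that assms(4,8) single_hexagon_central_iff[OF assms(5) that] by (auto simp: VH_def)
qed

theorem corollary11:
  fixes V :: "'v set" and E :: "('v \<times> 'v) set" and rot :: "'v \<Rightarrow> 'v \<Rightarrow> 'v"
    and Out :: "('v \<times> 'v) set" and hue :: "'v \<Rightarrow> 3" and \<phi> :: "'v \<Rightarrow> 2 \<times> 2"
    and c :: 3 and k :: "2 \<times> 2"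
  assumes "patch V E rot Out"
    and "proper_col V E hue"
    and "single_hexagon_coloring (bdry_V V Out) (bdry_E Out) hue \<phi> c k"
  defines "VH \<equiv> {v \<in> V. hue v \<noteq> c}"
  shows "(\<exists>g :: 'v \<Rightarrow> 2 \<times> 2. proper_col V E g \<and> (\<forall>v\<in>bdry_V V Out. g v = \<phi> v))
     \<longleftrightarrow> (\<exists>h :: 'v \<Rightarrow> 2 \<times> 2. proper_col VH (E \<inter> (VH \<times> VH)) h \<and>
             (\<forall>v\<in>VH. h v \<in> UNIV - {k}) \<and>
             (\<forall>v\<in>VH \<inter> bdry_V V Out. h v = \<phi> v))"
proof
  assume "\<exists>g :: 'v \<Rightarrow> 2 \<times> 2. proper_col V E g \<and> (\<forall>v\<in>bdry_V V Out. g v = \<phi> v)"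
  then show "\<exists>h. proper_col VH (E \<inter> (VH \<times> VH)) h \<and> (\<forall>v\<in>VH. h v \<in> UNIV - {k}) \<and>
      (\<forall>v\<in>VH \<inter> bdry_V V Out. h v = \<phi> v)"
    using noncentral_coloring_of_coloring[OF assms(1-3)] unfolding VH_def by blast
next
  assume "\<exists>h :: 'v \<Rightarrow> 2 \<times> 2. proper_col VH (E \<inter> (VH \<times> VH)) h \<and>
      (\<forall>v\<in>VH. h v \<in> UNIV - {k}) \<and> (\<forall>v\<in>VH \<inter> bdry_V V Out. h v = \<phi> v)"
  moreover have "E \<subseteq> V \<times> V"
    using assms(1) by (simp add: patch_def plane_graph_def simple_graph_def)
  ultimately show "\<exists>g. proper_col V E g \<and> (\<forall>v\<in>bdry_V V Out. g v = \<phi> v)"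
    using coloring_of_noncentral_coloring[OF _ assms(2) patch_boundary(1)[OF assms(1)] assms(3)]
    unfolding VH_def by blast
qed

end
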